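(* Let all parameters $k_a,k_{epo},V_{max},K_M,V_1,k_{23},k_{32},BSL,k_{in},S_{max},SC_{50},N_P,T_P,N_R,T_R$ be positive, with $V_{max}>k_{epo}$ and $N_P$ even. Consider the autonomous (post-dose) P\'erez-Ruixo system with $C(t)=BSL+A_2(t)/V_1$, $V_e(t)=\frac{S_{max}C(t)}{SC_{50}+C(t)}\frac{N_P}{T_P}$: $$A_1'=-k_aA_1,\quad A_2'=k_{epo}-\frac{V_{max}A_2/V_1}{K_M+A_2/V_1},\quad A_3'=k_{23}A_2-k_{32}A_3,$$ $$P_1'=k_{in}-V_e(t)P_1,\quad P_i'=V_e(t)(P_{i-1}-P_i)\ (2\le i\le N_P/2),\quad P_{N_P/2+1}'=V_e(t)P_{N_P/2}-\tfrac{N_P}{T_P}P_{N_P/2+1},$$ $$P_i'=\tfrac{N_P}{T_P}(P_{i-1}-P_i)\ (N_P/2+2\le i\le N_P),\quad R_1'=\tfrac{N_P}{T_P}P_{N_P}-\tfrac{N_R}{T_R}R_1,\quad R_i'=\tfrac{N_R}{T_R}(R_{i-1}-R_i)\ (2\le i\le N_R).$$ Its homeostatic equilibrium, given by $A_1^*=0$, $A_2^*=\frac{V_1k_{epo}K_M}{V_{max}-k_{epo}}$, $A_3^*=\frac{k_{23}}{k_{32}}A_2^*$, $C^*=BSL+A_2^*/V_1$, $P_1^*=\frac{k_{in}(SC_{50}+C^* )}{S_{max}C^*}\frac{T_P}{N_P}$ (and the corresponding transit compartment values), is locally asymptotically stable.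
   Context: $A_1,A_2,A_3$ are EPO amounts in depot, central and peripheral compartments; $P_i$ erythrocyte progenitor transit compartments; $R_i$ reticulocyte transit compartments. *)

theory Defs
  imports "HOL-Analysis.Analysis"
begin

record epo_par =
  ka :: real  kepo :: real  Vmax :: real  KM :: real  V1 :: real
  k23 :: real  k32 :: real  BSL :: real  kin :: real  Smax :: real
  SC50 :: real  NP :: nat  TP :: real  NR :: nat  TR :: real

text \<open>State vectors are functions nat => real; only the first
  3 + NP + NR coordinates are meaningful. Layout:
  index 0 = A1, 1 = A2, 2 = A3, 2+i = P_i (1 <= i <= NP),
  2+NP+i = R_i (1 <= i <= NR).\<close>

definition state_dim :: "epo_par \<Rightarrow> nat" where
  "state_dim p = 3 + NP p + NR p"

definition conc :: "epo_par \<Rightarrow> (nat \<Rightarrow> real) \<Rightarrow> real" where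
  "conc p x = BSL p + x 1 / V1 p"

definition Ve :: "epo_par \<Rightarrow> (nat \<Rightarrow> real) \<Rightarrow> real" where
  "Ve p x = (Smax p * conc p x / (SC50 p + conc p x)) * (real (NP p) / TP p)"

definition epo_field :: "epo_par \<Rightarrow> (nat \<Rightarrow> real) \<Rightarrow> nat \<Rightarrow> real" where
  "epo_field p x j =
    (let h = NP p div 2; kp = real (NP p) / TP p; kr = real (NR p) / TR p;
         P = (\<lambda>i. x (2 + i)); R = (\<lambda>i. x (2 + NP p + i)) in
     if j = 0 then - ka p * x 0
     else if j = 1 then kepo p - (Vmax p * x 1 / V1 p) / (KM p + x 1 / V1 p)
     else if j = 2 then k23 p * x 1 - k32 p * x 2
     else if j \<le> 2 + NP p then
       (let i = j - 2 in
        if i = 1 then kin p - Ve p x * P 1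
        else if i \<le> h then Ve p x * (P (i - 1) - P i)
        else if i = h + 1 then Ve p x * P h - kp * P (h + 1)
        else kp * (P (i - 1) - P i))
     else if j \<le> 2 + NP p + NR p then
       (let i = j - (2 + NP p) in
        if i = 1 then kp * P (NP p) - kr * R 1
        else kr * (R (i - 1) - R i))
     else 0)"

definition A2_eq :: "epo_par \<Rightarrow> real" where
  "A2_eq p = V1 p * kepo p * KM p / (Vmax p - kepo p)"

definition C_eq :: "epo_par \<Rightarrow> real" where
  "C_eq p = BSL p + A2_eq p / V1 p"

definition P1_eq :: "epo_par \<Rightarrow> real" where
  "P1_eq p = kin p * (SC50 p + C_eq p) / (Smax p * C_eq p) * (TP p / real (NP p))"

definition epo_eq :: "epo_par \<Rightarrow> nat \<Rightarrow> real" where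
  "epo_eq p j =
    (if j = 0 then 0
     else if j = 1 then A2_eq p
     else if j = 2 then k23 p / k32 p * A2_eq p
     else if j \<le> 2 + NP p div 2 then P1_eq p
     else if j \<le> 2 + NP p then kin p * TP p / real (NP p)
     else if j \<le> 2 + NP p + NR p then kin p * TR p / real (NR p)
     else 0)"

definition distn :: "nat \<Rightarrow> (nat \<Rightarrow> real) \<Rightarrow> (nat \<Rightarrow> real) \<Rightarrow> real" where
  "distn n x y = sqrt (\<Sum>i<n. (x i - y i)\<^sup>2)"

definition is_solution ::
  "nat \<Rightarrow> ((nat \<Rightarrow> real) \<Rightarrow> nat \<Rightarrow> real) \<Rightarrow> real set \<Rightarrow> (real \<Rightarrow> nat \<Rightarrow> real) \<Rightarrow> bool" where
  "is_solution n f I x \<longleftrightarrow>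
     (\<forall>i<n. \<forall>t\<in>I. ((\<lambda>s. x s i) has_real_derivative f (x t) i) (at t within I))"

definition loc_asym_stable ::
  "nat \<Rightarrow> ((nat \<Rightarrow> real) \<Rightarrow> nat \<Rightarrow> real) \<Rightarrow> (nat \<Rightarrow> real) \<Rightarrow> bool" where
  "loc_asym_stable n f e \<longleftrightarrow>
     (\<forall>i<n. f e i = 0) \<and>
     (\<forall>\<epsilon>>0. \<exists>\<delta>>0. \<forall>x0. distn n x0 e < \<delta> \<longrightarrow>
        (\<exists>x. is_solution n f {0..} x \<and> (\<forall>i<n. x 0 i = x0 i)) \<and>
        (\<forall>T>0. \<forall>x. is_solution n f {0..<T} x \<and> (\<forall>i<n. x 0 i = x0 i) \<longrightarrow>
           (\<forall>t\<in>{0..<T}. distn n (x t) e < \<epsilon>))) \<and>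
     (\<exists>\<delta>>0. \<forall>x. is_solution n f {0..} x \<and> distn n (x 0) e < \<delta> \<longrightarrow>
        ((\<lambda>t. distn n (x t) e) \<longlongrightarrow> 0) at_top)"

end

theory Submission
  imports Defs "HOL-Real_Asymp.Real_Asymp"
begin

text \<open>
  The model is a cascade driven by the central amount \<open>A\<^sub>2\<close>. Near the equilibrium, every
  deviation \<open>y\<^sub>j = x\<^sub>j - x\<^sub>j\<^sup>*\<close> satisfies
  \<open>y\<^sub>j y\<^sub>j' \<le> |y\<^sub>j| L (|y\<^sub>1| + |y\<^sub>j\<^sub>-\<^sub>1|) - d y\<^sub>j\<^sup>2\<close> (with no forcing for \<open>j \<le> 1\<close>):
  \<open>A\<^sub>1\<close> and the Michaelis-Menten elimination of \<open>A\<^sub>2\<close> are damped on their own, and each further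
  compartment is linear in itself and its predecessor, with rates that are constants or the
  stimulation \<open>V\<^sub>e\<close>, a Lipschitz function of \<open>A\<^sub>2\<close>. Comparison arguments for \<open>y\<^sub>j\<^sup>2\<close> show that
  \<open>|y\<^sub>1|\<close> never increases; induction along the cascade then bounds every \<open>|y\<^sub>j|\<close> by a multiple
  of the initial distance (stability) and drives it to \<open>0\<close> (attractivity). Solutions exist
  because the \<open>A\<^sub>2\<close> equation is separable and, once \<open>A\<^sub>2\<close> is known, the remaining equations
  are linear.
\<close>

section \<open>Scalar differential inequalities\<close>

lemma last_time_le:
  fixes f :: "real \<Rightarrow> real"
  assumes cont: "continuous_on {a..b} f" and "a \<le> b" "f a \<le> B"
  obtains s where "s \<in> {a..b}" "f s \<le> B" "\<And>t. s < t \<Longrightarrow> t \<le> b \<Longrightarrow> B < f t"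
proof -
  let ?S = "{a..b} \<inter> f -` {..B}"
  have "compact ?S"
    unfolding compact_eq_bounded_closed
    by (auto intro: bounded_subset continuous_closed_preimage[OF cont])
  moreover have "a \<in> ?S" using assms by auto
  ultimately obtain s where "s \<in> ?S" "\<And>t. t \<in> ?S \<Longrightarrow> t \<le> s"
    using compact_attains_sup[of ?S] by blast
  moreover have "B < f t" if "s < t" "t \<le> b" for t
    using \<open>s \<in> ?S\<close> that \<open>\<And>t. t \<in> ?S \<Longrightarrow> t \<le> s\<close>[of t] by fastforce
  ultimately show thesis by (intro that) auto
qed

lemma first_time_ge:
  fixes f :: "real \<Rightarrow> real"
  assumes cont: "continuous_on {a..b} f" and "a \<le> b" "m \<le> f b"
  obtains q where "q \<in> {a..b}" "m \<le> f q" "\<And>t. a \<le> t \<Longrightarrow> t < q \<Longrightarrow> f t < m"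
proof -
  let ?Q = "{a..b} \<inter> f -` {m..}"
  have "compact ?Q"
    unfolding compact_eq_bounded_closed
    by (auto intro: bounded_subset continuous_closed_preimage[OF cont])
  moreover have "b \<in> ?Q" using assms by auto
  ultimately obtain q where "q \<in> ?Q" "\<And>t. t \<in> ?Q \<Longrightarrow> q \<le> t"
    using compact_attains_inf[of ?Q] by blast
  then show thesis by (intro that) (force simp: not_less)+
qed

lemma le_if_deriv_nonpos_above:
  fixes f f' :: "real \<Rightarrow> real"
  assumes der: "\<And>t. t \<in> {0..<T} \<Longrightarrow> (f has_real_derivative f' t) (at t within {0..<T})"
    and f0: "f 0 \<le> B" and "B < B'"
    and nonpos: "\<And>t. t \<in> {0..<T} \<Longrightarrow> B < f t \<Longrightarrow> f t < B' \<Longrightarrow> f' t \<le> 0"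
    and t: "t \<in> {0..<T}"
  shows "f t \<le> B"
proof (rule ccontr)
  assume "\<not> f t \<le> B"
  define m where "m = min (f t) ((B + B') / 2)"
  have m: "B < m" "m < B'" "m \<le> f t" using \<open>\<not> f t \<le> B\<close> \<open>B < B'\<close> by (auto simp: m_def min_def)
  have cont: "continuous_on {0..t} f"
    using t by (intro continuous_on_subset[OF DERIV_continuous_on[OF der]]) auto
  obtain s where s: "s \<in> {0..t}" "f s \<le> B" "\<And>r. s < r \<Longrightarrow> r \<le> t \<Longrightarrow> B < f r"
    using last_time_le[OF cont _ f0] t by auto
  obtain q where q: "q \<in> {s..t}" "m \<le> f q" "\<And>r. s \<le> r \<Longrightarrow> r < q \<Longrightarrow> f r < m"
    using first_time_ge[of s t f m] continuous_on_subset[OF cont] s(1) m by auto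
  have "f q \<le> f s"
  proof (rule DERIV_nonpos_imp_decreasing_open[of s q f])
    fix r assume r: "s < r" "r < q"
    then have "(f has_real_derivative f' r) (at r within {0..<T})" using s q t by (intro der) auto
    moreover have "at r within {0..<T} = at r"
      using r s q t by (intro at_within_open_subset[of _ "{0<..<T}"]) auto
    moreover have "f' r \<le> 0"
      using nonpos[of r] s(3)[of r] q(3)[of r] r s(1) q(1) t m by fastforce
    ultimately show "\<exists>y. DERIV f r :> y \<and> y \<le> 0" by auto
  next
    show "continuous_on {s..q} f" using q(1) s(1) by (auto intro: continuous_on_subset[OF cont])
  qed (use q in auto)
  then show False using s(2) q(2) m(1) by linarith
qed

lemma dissipative_abs_bound:
  fixes y D :: "real \<Rightarrow> real"
  assumes der: "\<And>t. t \<in> {0..<T} \<Longrightarrow> (y has_real_derivative D t) (at t within {0..<T})"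
    and diss: "\<And>t. t \<in> {0..<T} \<Longrightarrow> y t * D t \<le> \<bar>y t\<bar> * \<Phi> - d * (y t)\<^sup>2"
    and "d > 0" and t: "t \<in> {0..<T}"
  shows "\<bar>y t\<bar> \<le> max \<bar>y 0\<bar> (\<Phi> / d)"
proof -
  define M where "M = max \<bar>y 0\<bar> (\<Phi> / d)"
  have "(y t)\<^sup>2 \<le> M\<^sup>2"
  proof (rule le_if_deriv_nonpos_above[of T "\<lambda>t. (y t)\<^sup>2" "\<lambda>t. 2 * y t * D t" _ "M\<^sup>2 + 1"])
    fix t assume "t \<in> {0..<T}"
    then show "((\<lambda>t. (y t)\<^sup>2) has_real_derivative 2 * y t * D t) (at t within {0..<T})"
      by (auto intro!: derivative_eq_intros der)
  next
    fix t assume t: "t \<in> {0..<T}" and "M\<^sup>2 < (y t)\<^sup>2"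
    then have "M < \<bar>y t\<bar>"
      using power2_less_imp_less[of M "\<bar>y t\<bar>"] by simp
    then have "\<Phi> < d * \<bar>y t\<bar>"
      using \<open>d > 0\<close> by (auto simp: M_def pos_divide_less_eq mult.commute)
    then have "\<bar>y t\<bar> * \<Phi> \<le> d * (y t)\<^sup>2"
      by (metis abs_ge_zero mult.left_commute mult_left_mono order_less_imp_le power2_eq_square abs_mult_self_eq)
    then show "2 * y t * D t \<le> 0" using diss[OF t] by linarith
  next
    have "\<bar>y 0\<bar> \<le> \<bar>M\<bar>" by (simp add: M_def)
    then show "(y 0)\<^sup>2 \<le> M\<^sup>2" by (simp only: abs_le_square_iff)
  qed (use t in auto)
  then have "\<bar>y t\<bar> \<le> \<bar>M\<bar>" by (simp only: abs_le_square_iff)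
  then show ?thesis by (simp add: M_def)
qed

lemma dissipative_abs_nonincreasing:
  fixes y D :: "real \<Rightarrow> real"
  assumes der: "\<And>t. t \<in> {0..<T} \<Longrightarrow> (y has_real_derivative D t) (at t within {0..<T})"
    and diss: "\<And>t. t \<in> {0..<T} \<Longrightarrow> \<bar>y t\<bar> < \<rho> \<Longrightarrow> y t * D t \<le> 0"
    and y0: "\<bar>y 0\<bar> < \<rho>" and t: "t \<in> {0..<T}"
  shows "\<bar>y t\<bar> \<le> \<bar>y 0\<bar>"
proof -
  have "(y t)\<^sup>2 \<le> (y 0)\<^sup>2"
  proof (rule le_if_deriv_nonpos_above[of T "\<lambda>t. (y t)\<^sup>2" "\<lambda>t. 2 * y t * D t" _ "\<rho>\<^sup>2"])
    fix t assume "t \<in> {0..<T}"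
    then show "((\<lambda>t. (y t)\<^sup>2) has_real_derivative 2 * y t * D t) (at t within {0..<T})"
      by (auto intro!: derivative_eq_intros der)
  next
    fix t assume "t \<in> {0..<T}" "(y t)\<^sup>2 < \<rho>\<^sup>2"
    moreover have "0 \<le> \<rho>" using y0 by linarith
    ultimately show "2 * y t * D t \<le> 0"
      using diss[of t] power2_less_imp_less[of "\<bar>y t\<bar>" \<rho>] by (simp add: mult.commute)
  next
    show "(y 0)\<^sup>2 < \<rho>\<^sup>2"
      using y0 power_strict_mono[of "\<bar>y 0\<bar>" \<rho> 2] by simp
  qed (use t in auto)
  then show ?thesis by (simp add: abs_le_square_iff)
qed

lemma exp_weighted_nonincreasing:
  fixes f f' :: "real \<Rightarrow> real"
  assumes der: "\<And>t. t \<ge> 0 \<Longrightarrow> (f has_real_derivative f' t) (at t within {0..})"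
    and decay: "\<And>s. t0 < s \<Longrightarrow> f' s \<le> - a * (f s - c)"
    and "0 \<le> t0" "t0 \<le> t"
  shows "(f t - c) * exp (a * t) \<le> (f t0 - c) * exp (a * t0)"
proof -
  define W where "W t = (f t - c) * exp (a * t)" for t
  define W' where "W' t = (f' t + a * (f t - c)) * exp (a * t)" for t
  have derW: "(W has_real_derivative W' t) (at t within {0..})" if "t \<ge> 0" for t
    unfolding W_def W'_def using that by (auto intro!: derivative_eq_intros der simp: algebra_simps)
  have "W t \<le> W t0"
  proof (rule DERIV_nonpos_imp_decreasing_open[of t0 t W])
    fix s assume s: "t0 < s" "s < t"
    have "at s within {0..} = at s"
      using s \<open>0 \<le> t0\<close> by (intro at_within_open_subset[of _ "{0<..}"]) auto
    moreover have "W' s \<le> 0"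
      using decay[OF s(1)] by (simp add: W'_def mult_nonpos_nonneg)
    ultimately show "\<exists>y. DERIV W s :> y \<and> y \<le> 0" using derW[of s] s \<open>0 \<le> t0\<close> by auto
  next
    show "continuous_on {t0..t} W"
      by (rule continuous_on_subset[OF DERIV_continuous_on[OF derW]]) (use \<open>0 \<le> t0\<close> in auto)
  qed (use \<open>t0 \<le> t\<close> in simp)
  then show ?thesis by (simp add: W_def)
qed

lemma decay_ineq_tendsto_0:
  fixes f f' h :: "real \<Rightarrow> real"
  assumes der: "\<And>t. t \<ge> 0 \<Longrightarrow> (f has_real_derivative f' t) (at t within {0..})"
    and decay: "\<And>t. t \<ge> 0 \<Longrightarrow> f' t \<le> h t - a * f t"
    and "a > 0" and h: "(h \<longlongrightarrow> 0) at_top" and nonneg: "\<And>t. f t \<ge> 0"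
  shows "(f \<longlongrightarrow> 0) at_top"
proof (rule order_tendstoI)
  fix e :: real assume "e < 0"
  then show "eventually (\<lambda>t. e < f t) at_top"
    using nonneg by (auto intro: always_eventually less_le_trans)
next
  fix \<epsilon> :: real assume "0 < \<epsilon>"
  then have "eventually (\<lambda>t. h t < a * \<epsilon> / 2) at_top"
    using order_tendstoD(2)[OF h, of "a * \<epsilon> / 2"] \<open>a > 0\<close> by simp
  then obtain t1 where "\<And>t. t \<ge> t1 \<Longrightarrow> h t < a * \<epsilon> / 2"
    by (auto simp: eventually_at_top_linorder)
  then obtain t0 where t0: "t0 \<ge> 0" "\<And>t. t \<ge> t0 \<Longrightarrow> h t < a * \<epsilon> / 2"
    by (metis max.cobounded1 max.cobounded2 order_trans)
  have decay': "f' s \<le> - a * (f s - \<epsilon> / 2)" if "t0 < s" for s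
  proof -
    have "f' s \<le> h s - a * f s" "h s < a * \<epsilon> / 2" using decay t0 that by auto
    then show ?thesis by (simp add: right_diff_distrib)
  qed
  define C where "C = (f t0 - \<epsilon> / 2) * exp (a * t0)"
  have W_le: "(f t - \<epsilon> / 2) * exp (a * t) \<le> C" if "t0 \<le> t" for t
    unfolding C_def by (rule exp_weighted_nonincreasing[OF der decay' \<open>t0 \<ge> 0\<close> that])
  have "((\<lambda>t. exp (- a * t)) \<longlongrightarrow> 0) at_top"
    using \<open>a > 0\<close> by real_asymp
  then have "((\<lambda>t. \<epsilon> / 2 + C * exp (- a * t)) \<longlongrightarrow> \<epsilon> / 2 + C * 0) at_top"
    by (intro tendsto_intros)
  from order_tendstoD(2)[OF this, of \<epsilon>]
  have "eventually (\<lambda>t. \<epsilon> / 2 + C * exp (- a * t) < \<epsilon>) at_top"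
    using \<open>0 < \<epsilon>\<close> by simp
  moreover have "eventually (\<lambda>t. t \<ge> t0) at_top" by simp
  ultimately show "eventually (\<lambda>t. f t < \<epsilon>) at_top"
  proof eventually_elim
    case (elim t)
    have "f t - \<epsilon> / 2 \<le> C * exp (- a * t)"
      using W_le[OF elim(2)] by (simp add: exp_minus divide_simps mult.commute)
    then show ?case using elim(1) by linarith
  qed
qed

lemma dissipative_tendsto_0:
  fixes y D \<Phi> :: "real \<Rightarrow> real"
  assumes der: "\<And>t. t \<ge> 0 \<Longrightarrow> (y has_real_derivative D t) (at t within {0..})"
    and diss: "\<And>t. t \<ge> 0 \<Longrightarrow> y t * D t \<le> \<bar>y t\<bar> * \<Phi> t - d * (y t)\<^sup>2"
    and "d > 0" and \<Phi>: "\<And>t. \<Phi> t \<ge> 0" "(\<Phi> \<longlongrightarrow> 0) at_top"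
    and bounded: "\<And>t. t \<ge> 0 \<Longrightarrow> \<bar>y t\<bar> \<le> M"
  shows "(y \<longlongrightarrow> 0) at_top"
proof -
  have "((\<lambda>t. (y t)\<^sup>2) \<longlongrightarrow> 0) at_top"
  proof (rule decay_ineq_tendsto_0[of _ "\<lambda>t. 2 * y t * D t" "\<lambda>t. 2 * M * \<Phi> t" "2 * d"])
    fix t :: real assume t: "t \<ge> 0"
    then show "((\<lambda>t. (y t)\<^sup>2) has_real_derivative 2 * y t * D t) (at t within {0..})"
      by (auto intro!: derivative_eq_intros der)
    have "\<bar>y t\<bar> * \<Phi> t \<le> M * \<Phi> t" using bounded[OF t] \<Phi>(1) by (intro mult_right_mono) auto
    then show "2 * y t * D t \<le> 2 * M * \<Phi> t - 2 * d * (y t)\<^sup>2" using diss[OF t] by linarith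
  next
    show "((\<lambda>t. 2 * M * \<Phi> t) \<longlongrightarrow> 0) at_top" using tendsto_mult_right_zero[OF \<Phi>(2)] by simp
  qed (use \<open>d > 0\<close> in auto)
  then have "((\<lambda>t. sqrt ((y t)\<^sup>2)) \<longlongrightarrow> sqrt 0) at_top" by (rule tendsto_real_sqrt)
  then show ?thesis by (simp add: tendsto_rabs_zero_iff)
qed

section \<open>Triangular dissipative systems\<close>

lemma abs_le_distn: "i < n \<Longrightarrow> \<bar>x i - y i\<bar> \<le> distn n x y"
  using member_le_L2_set[of "{..<n}" i "\<lambda>i. \<bar>x i - y i\<bar>"] by (simp add: distn_def L2_set_def)

lemma distn_le_sum_abs: "distn n x y \<le> (\<Sum>i<n. \<bar>x i - y i\<bar>)"
  unfolding distn_def using L2_set_le_sum_abs[of "\<lambda>i. x i - y i" "{..<n}"] by (simp add: L2_set_def)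

lemma is_solution_deriv_deviation:
  assumes "is_solution n f I x" "i < n" "t \<in> I"
  shows "((\<lambda>s. x s i - c) has_real_derivative f (x t) i) (at t within I)"
  using assms by (auto simp: is_solution_def intro!: derivative_eq_intros)

lemma is_solution_restrict:
  assumes "is_solution n f {0..} x"
  shows "is_solution n f {0..<T} x"
  unfolding is_solution_def
proof (intro allI impI ballI)
  fix i t assume "i < n" "t \<in> {0..<T}"
  then have "((\<lambda>s. x s i) has_real_derivative f (x t) i) (at t within {0..})"
    using assms by (auto simp: is_solution_def)
  then show "((\<lambda>s. x s i) has_real_derivative f (x t) i) (at t within {0..<T})"
    by (rule DERIV_subset) auto
qed

definition cascade_coupling :: "real \<Rightarrow> (nat \<Rightarrow> real) \<Rightarrow> nat \<Rightarrow> real" where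
  "cascade_coupling L z i = (if i \<le> 1 then 0 else L * (\<bar>z 1\<bar> + \<bar>z (i - 1)\<bar>))"

text \<open>
  Component \<open>1\<close> drives the cascade: while it stays within \<open>\<rho>\<close> of \<open>e\<close>, each deviation is damped
  at rate \<open>d\<close> and forced only through components \<open>1\<close> and \<open>i - 1\<close>.
\<close>

definition cascade_dissipative ::
  "nat \<Rightarrow> ((nat \<Rightarrow> real) \<Rightarrow> nat \<Rightarrow> real) \<Rightarrow> (nat \<Rightarrow> real) \<Rightarrow> real \<Rightarrow> real \<Rightarrow> real \<Rightarrow> bool" where
  "cascade_dissipative n f e \<rho> d L \<longleftrightarrow>
     (\<forall>x i. \<bar>x 1 - e 1\<bar> \<le> \<rho> \<longrightarrow> i < n \<longrightarrow>
        (x i - e i) * f x i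
          \<le> \<bar>x i - e i\<bar> * cascade_coupling L (\<lambda>j. x j - e j) i - d * (x i - e i)\<^sup>2)"

lemma cascade_dissipativeD:
  assumes "cascade_dissipative n f e \<rho> d L" "\<bar>x 1 - e 1\<bar> \<le> \<rho>" "i < n"
  shows "(x i - e i) * f x i \<le> \<bar>x i - e i\<bar> * cascade_coupling L (\<lambda>j. x j - e j) i - d * (x i - e i)\<^sup>2"
  using assms unfolding cascade_dissipative_def by blast

text \<open>
  Component \<open>i + 2\<close> is forced by at most \<open>L (\<delta> + cascade_gain L d (i + 1) \<delta>)\<close>, which
  damping at rate \<open>d\<close> turns into the recursion below.
\<close>

fun cascade_gain :: "real \<Rightarrow> real \<Rightarrow> nat \<Rightarrow> real" where
  "cascade_gain L d 0 = 1"
| "cascade_gain L d (Suc 0) = 1"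
| "cascade_gain L d (Suc (Suc i)) = max 1 (L * (1 + cascade_gain L d (Suc i)) / d)"

lemma cascade_gain_ge_1: "1 \<le> cascade_gain L d i"
  by (induction L d i rule: cascade_gain.induct) auto

lemma cascade_driver_nonincreasing:
  assumes diss: "cascade_dissipative n f e \<rho> d L" and "d > 0" "1 < n"
    and sol: "is_solution n f {0..<T} x" and x0: "\<bar>x 0 1 - e 1\<bar> < \<rho>" and t: "t \<in> {0..<T}"
  shows "\<bar>x t 1 - e 1\<bar> \<le> \<bar>x 0 1 - e 1\<bar>"
proof (rule dissipative_abs_nonincreasing[where D = "\<lambda>t. f (x t) 1"])
  fix s assume s: "s \<in> {0..<T}" and "\<bar>x s 1 - e 1\<bar> < \<rho>"
  then have "(x s 1 - e 1) * f (x s) 1 \<le> - d * (x s 1 - e 1)\<^sup>2"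
    using cascade_dissipativeD[OF diss, of "x s" 1] \<open>1 < n\<close>
    by (simp add: cascade_coupling_def)
  also have "\<dots> \<le> 0" using \<open>d > 0\<close> by simp
  finally show "(x s 1 - e 1) * f (x s) 1 \<le> 0" .
qed (use is_solution_deriv_deviation[OF sol \<open>1 < n\<close>] x0 t in auto)

lemma cascade_component_bound:
  assumes diss: "cascade_dissipative n f e \<rho> d L" and "d > 0"
    and sol: "is_solution n f {0..<T} x" and "i < n"
    and driver: "\<And>s. s \<in> {0..<T} \<Longrightarrow> \<bar>x s 1 - e 1\<bar> \<le> \<rho>"
    and coupling: "\<And>s. s \<in> {0..<T} \<Longrightarrow> cascade_coupling L (\<lambda>j. x s j - e j) i \<le> \<Phi>"
    and "t \<in> {0..<T}"
  shows "\<bar>x t i - e i\<bar> \<le> max \<bar>x 0 i - e i\<bar> (\<Phi> / d)"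
proof (rule dissipative_abs_bound[where D = "\<lambda>s. f (x s) i"])
  fix s assume s: "s \<in> {0..<T}"
  have "\<bar>x s i - e i\<bar> * cascade_coupling L (\<lambda>j. x s j - e j) i \<le> \<bar>x s i - e i\<bar> * \<Phi>"
    using coupling[OF s] by (intro mult_left_mono) auto
  with cascade_dissipativeD[OF diss, of "x s" i, OF driver[OF s] \<open>i < n\<close>]
  show "(x s i - e i) * f (x s) i \<le> \<bar>x s i - e i\<bar> * \<Phi> - d * (x s i - e i)\<^sup>2"
    by linarith
qed (use is_solution_deriv_deviation[OF sol \<open>i < n\<close>] assms in auto)

lemma cascade_bound:
  assumes diss: "cascade_dissipative n f e \<rho> d L" and "d > 0" "L \<ge> 0" "1 < n"
    and sol: "is_solution n f {0..<T} x"
    and init: "\<And>i. i < n \<Longrightarrow> \<bar>x 0 i - e i\<bar> \<le> \<delta>" and "\<delta> < \<rho>"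
    and "i < n" "t \<in> {0..<T}"
  shows "\<bar>x t i - e i\<bar> \<le> cascade_gain L d i * \<delta>"
  using \<open>i < n\<close> \<open>t \<in> {0..<T}\<close>
proof (induction i arbitrary: t rule: less_induct)
  case (less i)
  have "0 \<le> \<delta>" using init[of 0] \<open>1 < n\<close> by linarith
  have driver: "\<bar>x s 1 - e 1\<bar> \<le> \<delta>" if "s \<in> {0..<T}" for s
    using cascade_driver_nonincreasing[OF diss \<open>d > 0\<close> \<open>1 < n\<close> sol _ that] init[of 1] \<open>\<delta> < \<rho>\<close> \<open>1 < n\<close>
    by linarith
  then have "\<bar>x s 1 - e 1\<bar> \<le> \<rho>" if "s \<in> {0..<T}" for s
    using that \<open>\<delta> < \<rho>\<close> by fastforce
  note bound = cascade_component_bound[OF diss \<open>d > 0\<close> sol less.prems(1) this _ less.prems(2)]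
  consider "i = 0" | "i = 1" | k where "i = Suc (Suc k)"
    by (metis One_nat_def not0_implies_Suc)
  then show ?case
  proof cases
    case 1
    then show ?thesis
      using bound[of 0] init[OF less.prems(1)] by (simp add: cascade_coupling_def)
  next
    case 2
    then show ?thesis using driver[OF less.prems(2)] by simp
  next
    case (3 k)
    let ?g = "L * (1 + cascade_gain L d (Suc k)) / d"
    have "cascade_coupling L (\<lambda>j. x s j - e j) i \<le> L * (\<delta> + cascade_gain L d (Suc k) * \<delta>)"
      if "s \<in> {0..<T}" for s
    proof -
      have "\<bar>x s (Suc k) - e (Suc k)\<bar> \<le> cascade_gain L d (Suc k) * \<delta>"
        using less.IH[of "Suc k" s] less.prems that 3 by simp
      then show ?thesis
        using driver[OF that] 3 \<open>L \<ge> 0\<close> by (simp add: cascade_coupling_def mult_left_mono)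
    qed
    then have "\<bar>x t i - e i\<bar> \<le> max \<bar>x 0 i - e i\<bar> (?g * \<delta>)"
      using bound by (simp add: algebra_simps)
    moreover have "?g * \<delta> \<le> max 1 ?g * \<delta>" "1 * \<delta> \<le> max 1 ?g * \<delta>"
      using \<open>0 \<le> \<delta>\<close> by (intro mult_right_mono; simp)+
    ultimately show ?thesis using init[OF less.prems(1)] 3 by simp
  qed
qed

lemma cascade_distn_bound:
  assumes diss: "cascade_dissipative n f e \<rho> d L" and "d > 0" "L \<ge> 0" "1 < n"
    and sol: "is_solution n f {0..<T} x" and "distn n (x 0) e < \<rho>" and "t \<in> {0..<T}"
  shows "distn n (x t) e \<le> (\<Sum>i<n. cascade_gain L d i) * distn n (x 0) e"
proof -
  have "distn n (x t) e \<le> (\<Sum>i<n. \<bar>x t i - e i\<bar>)" by (rule distn_le_sum_abs)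
  also have "\<dots> \<le> (\<Sum>i<n. cascade_gain L d i * distn n (x 0) e)"
    using assms by (intro sum_mono cascade_bound[OF diss]) (auto intro: abs_le_distn)
  finally show ?thesis by (simp add: sum_distrib_right)
qed

lemma cascade_tendsto_0:
  assumes diss: "cascade_dissipative n f e \<rho> d L" and "d > 0" "L \<ge> 0" "1 < n"
    and sol: "is_solution n f {0..} x"
    and init: "\<And>i. i < n \<Longrightarrow> \<bar>x 0 i - e i\<bar> \<le> \<delta>" and "\<delta> < \<rho>" and "i < n"
  shows "((\<lambda>t. x t i - e i) \<longlongrightarrow> 0) at_top"
  using \<open>i < n\<close>
proof (induction i rule: less_induct)
  case (less i)
  have bound: "\<bar>x t j - e j\<bar> \<le> cascade_gain L d j * \<delta>" if "t \<ge> 0" "j < n" for t j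
    using cascade_bound[OF diss \<open>d > 0\<close> \<open>L \<ge> 0\<close> \<open>1 < n\<close> is_solution_restrict[OF sol] init] that \<open>\<delta> < \<rho>\<close>
    by (metis atLeastLessThan_iff less_add_one)
  have coupling: "((\<lambda>t. cascade_coupling L (\<lambda>j. x t j - e j) i) \<longlongrightarrow> 0) at_top"
  proof (cases "i \<le> 1")
    case False
    then have "((\<lambda>t. L * (\<bar>x t 1 - e 1\<bar> + \<bar>x t (i - 1) - e (i - 1)\<bar>)) \<longlongrightarrow> L * (\<bar>0\<bar> + \<bar>0\<bar>)) at_top"
      using less.IH[of 1] less.IH[of "i - 1"] less.prems by (intro tendsto_intros) auto
    then show ?thesis using False by (simp add: cascade_coupling_def)
  qed (simp add: cascade_coupling_def)
  show ?case
  proof (rule dissipative_tendsto_0[where D = "\<lambda>t. f (x t) i"])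
    fix t :: real assume "t \<ge> 0"
    then have "\<bar>x t 1 - e 1\<bar> \<le> \<rho>" using bound[of t 1] \<open>1 < n\<close> \<open>\<delta> < \<rho>\<close> by simp
    from cascade_dissipativeD[OF diss, of "x t" i, OF this less.prems]
    show "(x t i - e i) * f (x t) i
        \<le> \<bar>x t i - e i\<bar> * cascade_coupling L (\<lambda>j. x t j - e j) i - d * (x t i - e i)\<^sup>2" .
  qed (use is_solution_deriv_deviation[OF sol less.prems] bound less.prems coupling \<open>d > 0\<close> \<open>L \<ge> 0\<close>
      in \<open>auto simp: cascade_coupling_def\<close>)
qed

theorem loc_asym_stable_if_cascade_dissipative:
  assumes eq: "\<And>i. i < n \<Longrightarrow> f e i = 0"
    and diss: "cascade_dissipative n f e \<rho> d L" and "\<rho> > 0" "d > 0" "L \<ge> 0" "1 < n"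
    and exist: "\<And>x0. \<bar>x0 1 - e 1\<bar> < \<rho> \<Longrightarrow> \<exists>x. is_solution n f {0..} x \<and> (\<forall>i<n. x 0 i = x0 i)"
  shows "loc_asym_stable n f e"
  unfolding loc_asym_stable_def
proof (intro conjI allI impI)
  define G where "G = (\<Sum>i<n. cascade_gain L d i)"
  have "G \<ge> 0" unfolding G_def by (meson cascade_gain_ge_1 order_trans sum_nonneg zero_le_one)
  fix \<epsilon> :: real assume "\<epsilon> > 0"
  show "\<exists>\<delta>>0. \<forall>x0. distn n x0 e < \<delta> \<longrightarrow>
        (\<exists>x. is_solution n f {0..} x \<and> (\<forall>i<n. x 0 i = x0 i)) \<and>
        (\<forall>T>0. \<forall>x. is_solution n f {0..<T} x \<and> (\<forall>i<n. x 0 i = x0 i) \<longrightarrow>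
           (\<forall>t\<in>{0..<T}. distn n (x t) e < \<epsilon>))"
  proof (intro exI[of _ "min \<rho> (\<epsilon> / (G + 1))"] conjI allI impI ballI)
    show "min \<rho> (\<epsilon> / (G + 1)) > 0" using \<open>\<rho> > 0\<close> \<open>\<epsilon> > 0\<close> \<open>G \<ge> 0\<close> by simp
    fix x0 assume x0: "distn n x0 e < min \<rho> (\<epsilon> / (G + 1))"
    then show "\<exists>x. is_solution n f {0..} x \<and> (\<forall>i<n. x 0 i = x0 i)"
      using exist abs_le_distn[OF \<open>1 < n\<close>, of x0 e] by force
    fix T t x assume "T > 0" and x: "is_solution n f {0..<T} x \<and> (\<forall>i<n. x 0 i = x0 i)"
      and "t \<in> {0..<T}"
    have "distn n (x 0) e = distn n x0 e" using x by (simp add: distn_def)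
    then have "distn n (x t) e \<le> G * distn n x0 e"
      using cascade_distn_bound[OF diss \<open>d > 0\<close> \<open>L \<ge> 0\<close> \<open>1 < n\<close>, of T x t] x x0 \<open>t \<in> {0..<T}\<close>
      by (simp add: G_def)
    also have "\<dots> \<le> G * (\<epsilon> / (G + 1))" using x0 \<open>G \<ge> 0\<close> by (intro mult_left_mono) auto
    also have "\<dots> < \<epsilon>" using \<open>G \<ge> 0\<close> \<open>\<epsilon> > 0\<close> by (simp add: field_simps)
    finally show "distn n (x t) e < \<epsilon>" .
  qed
next
  show "\<exists>\<delta>>0. \<forall>x. is_solution n f {0..} x \<and> distn n (x 0) e < \<delta> \<longrightarrow>
        ((\<lambda>t. distn n (x t) e) \<longlongrightarrow> 0) at_top"
  proof (intro exI[of _ \<rho>] conjI allI impI \<open>\<rho> > 0\<close>)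
    fix x assume x: "is_solution n f {0..} x \<and> distn n (x 0) e < \<rho>"
    then have "((\<lambda>t. x t i - e i) \<longlongrightarrow> 0) at_top" if "i < n" for i
      using cascade_tendsto_0[OF diss \<open>d > 0\<close> \<open>L \<ge> 0\<close> \<open>1 < n\<close>, of x "distn n (x 0) e"] that
      by (auto intro: abs_le_distn)
    then have "((\<lambda>t. sqrt (\<Sum>i<n. (x t i - e i)\<^sup>2)) \<longlongrightarrow> sqrt (\<Sum>i<n. 0\<^sup>2)) at_top"
      by (intro tendsto_intros) auto
    then show "((\<lambda>t. distn n (x t) e) \<longlongrightarrow> 0) at_top" by (simp add: distn_def)
  qed
qed (use eq in auto)

section \<open>Existence of solutions\<close>

lemma has_real_derivative_integral_from_0:
  fixes g :: "real \<Rightarrow> real"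
  assumes "continuous_on {0..} g" "t \<ge> 0"
  shows "((\<lambda>u. integral {0..u} g) has_real_derivative g t) (at t within {0..})"
proof -
  have "((\<lambda>u. integral {0..u} g) has_real_derivative g t) (at t within {0..t+1})"
    using assms by (intro integral_has_real_derivative) (auto intro: continuous_on_subset)
  moreover have "at t within {0..t+1} = at t within {0..}"
    by (rule at_within_nhd[of _ "{..<t+1}"]) (use assms in auto)
  ultimately show ?thesis by simp
qed

lemma linear_ode_exists:
  fixes a b :: "real \<Rightarrow> real"
  assumes a: "continuous_on {0..} a" and b: "continuous_on {0..} b"
  shows "\<exists>y. y 0 = y0 \<and> (\<forall>t\<ge>0. (y has_real_derivative a t - b t * y t) (at t within {0..}))"
proof -
  define B where "B u = integral {0..u} b" for u
  have dB: "(B has_real_derivative b t) (at t within {0..})" if "t \<ge> 0" for t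
    unfolding B_def using b that by (rule has_real_derivative_integral_from_0)
  define g where "g s = a s * exp (B s)" for s
  have "continuous_on {0..} g"
    unfolding g_def by (intro continuous_intros a DERIV_continuous_on[OF dB]) auto
  then have dI: "((\<lambda>u. integral {0..u} g) has_real_derivative g t) (at t within {0..})" if "t \<ge> 0" for t
    using that by (rule has_real_derivative_integral_from_0)
  define y where "y t = (y0 + integral {0..t} g) * exp (- B t)" for t
  have "(y has_real_derivative a t - b t * y t) (at t within {0..})" if "t \<ge> 0" for t
  proof -
    have "(y has_real_derivative g t * exp (- B t) + (y0 + integral {0..t} g) * (exp (- B t) * - b t))
        (at t within {0..})"
      unfolding y_def by (auto intro!: derivative_eq_intros dI dB that)
    then show ?thesis by (simp add: g_def y_def exp_minus field_simps)
  qed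
  moreover have "y 0 = y0" by (simp add: y_def B_def)
  ultimately show ?thesis by blast
qed

lemma linear_cascade_exists:
  fixes u :: "real \<Rightarrow> real" and a b c :: "nat \<Rightarrow> real \<Rightarrow> real"
  assumes u: "continuous_on {0..} u"
    and abc: "\<And>k. continuous_on {0..} (a k)" "\<And>k. continuous_on {0..} (b k)" "\<And>k. continuous_on {0..} (c k)"
  shows "\<exists>w. w 0 = u \<and> (\<forall>k. w (Suc k) 0 = y0 k \<and> (\<forall>t\<ge>0.
           (w (Suc k) has_real_derivative a k t + b k t * w k t - c k t * w (Suc k) t) (at t within {0..})))"
proof -
  define step where "step k z = (SOME y. y 0 = y0 k \<and> (\<forall>t\<ge>0.
      (y has_real_derivative a k t + b k t * z t - c k t * y t) (at t within {0..})))" for k z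
  have step: "step k z 0 = y0 k \<and> (\<forall>t\<ge>0.
      (step k z has_real_derivative a k t + b k t * z t - c k t * step k z t) (at t within {0..}))"
    if "continuous_on {0..} z" for k z
  proof -
    have "\<exists>y. y 0 = y0 k \<and> (\<forall>t\<ge>0.
        (y has_real_derivative a k t + b k t * z t - c k t * y t) (at t within {0..}))"
      by (rule linear_ode_exists) (intro continuous_intros abc that)+
    then show ?thesis unfolding step_def by (rule someI_ex)
  qed
  define w where "w = rec_nat u step"
  have cont: "continuous_on {0..} (w k)" for k
  proof (induction k)
    case (Suc k)
    then show ?case using step[OF Suc] by (auto simp: w_def intro!: DERIV_continuous_on)
  qed (simp add: w_def u)
  have "w (Suc k) 0 = y0 k \<and> (\<forall>t\<ge>0.
      (w (Suc k) has_real_derivative a k t + b k t * w k t - c k t * w (Suc k) t) (at t within {0..}))" for k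
    using step[OF cont[of k]] by (simp add: w_def)
  then show ?thesis by (intro exI[of _ w]) (simp add: w_def)
qed

lemma deriv_pos_imp_strict_mono_below:
  fixes H H' :: "real \<Rightarrow> real"
  assumes der: "\<And>r. 0 < r \<Longrightarrow> r < b \<Longrightarrow> (H has_real_derivative H' r) (at r)"
    and pos: "\<And>r. 0 < r \<Longrightarrow> r < b \<Longrightarrow> H' r > 0"
    and "0 < r" "r < s" "s < b"
  shows "H r < H s"
proof (rule DERIV_pos_imp_increasing[of r s H])
  fix x assume "r \<le> x" "x \<le> s"
  then have "0 < x" "x < b" using assms by auto
  then show "\<exists>y. DERIV H x :> y \<and> 0 < y" using der pos by blast
qed (use assms in auto)

lemma deriv_pos_level_point:
  fixes H H' :: "real \<Rightarrow> real"
  assumes der: "\<And>r. 0 < r \<Longrightarrow> r < b \<Longrightarrow> (H has_real_derivative H' r) (at r)"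
    and pos: "\<And>r. 0 < r \<Longrightarrow> r < b \<Longrightarrow> H' r > 0"
    and unbounded: "\<And>y. \<exists>r. 0 < r \<and> r < b \<and> H r \<le> y"
    and "0 < m" "m < b" "y < H m"
  shows "\<exists>r. 0 < r \<and> r < m \<and> H r = y"
proof -
  note mono = deriv_pos_imp_strict_mono_below[where b = b, OF der pos]
  obtain r1 where r1: "0 < r1" "r1 < b" "H r1 \<le> y" using unbounded by blast
  have "r1 < m"
  proof (rule ccontr)
    assume "\<not> r1 < m"
    then have "m = r1 \<or> m < r1" by auto
    then have "H m \<le> H r1" using mono[of m r1] \<open>0 < m\<close> r1(2) by auto
    with r1(3) \<open>y < H m\<close> show False by linarith
  qed
  moreover have "continuous_on {r1..m} H"
    using r1 assms by (intro continuous_at_imp_continuous_on ballI DERIV_isCont[OF der]) auto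
  ultimately obtain r where "r1 \<le> r" "r \<le> m" "H r = y"
    using IVT'[of H r1 y m] r1 \<open>y < H m\<close> by auto
  moreover have "r \<noteq> m" using \<open>H r = y\<close> \<open>y < H m\<close> by auto
  ultimately show ?thesis using r1 by (intro exI[of _ r]) auto
qed

lemma deriv_pos_inverse_exists:
  fixes H H' :: "real \<Rightarrow> real"
  assumes der: "\<And>r. 0 < r \<Longrightarrow> r < b \<Longrightarrow> (H has_real_derivative H' r) (at r)"
    and pos: "\<And>r. 0 < r \<Longrightarrow> r < b \<Longrightarrow> H' r > 0"
    and unbounded: "\<And>y. \<exists>r. 0 < r \<and> r < b \<and> H r \<le> y"
    and "0 < m" "m < b"
  obtains G where "\<And>y. y < H m \<Longrightarrow> 0 < G y \<and> G y < m \<and> H (G y) = y"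
    "\<And>y. y < H m \<Longrightarrow> (G has_real_derivative inverse (H' (G y))) (at y)"
proof
  note mono = deriv_pos_imp_strict_mono_below[where b = b, OF der pos]
  have inj: "r = s" if "0 < r" "r < b" "0 < s" "s < b" "H r = H s" for r s
    using mono[of r s] mono[of s r] that by (cases r s rule: linorder_cases) auto
  define G where "G y = (THE r. 0 < r \<and> r < m \<and> H r = y)" for y
  show G: "0 < G y \<and> G y < m \<and> H (G y) = y" if y: "y < H m" for y
  proof -
    obtain r where r: "0 < r" "r < m" "H r = y"
      using deriv_pos_level_point[where b = b, OF der pos unbounded \<open>0 < m\<close> \<open>m < b\<close> y] by blast
    have "\<exists>!r. 0 < r \<and> r < m \<and> H r = y"
    proof (rule ex1I[of _ r])
      fix s assume "0 < s \<and> s < m \<and> H s = y"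
      with r \<open>m < b\<close> show "s = r" by (metis inj order.strict_trans)
    qed (use r in auto)
    then show ?thesis unfolding G_def by (rule theI')
  qed
  have G_H: "G (H r) = r" if "0 < r" "r < m" for r
    using G[of "H r"] mono[of r m] inj[of "G (H r)" r] that \<open>m < b\<close> by auto
  show "(G has_real_derivative inverse (H' (G y))) (at y)" if "y < H m" for y
  proof (rule DERIV_inverse_function[where a = "y - 1" and b = "H m"])
    have Gy: "0 < G y" "G y < m" using G[OF that] by auto
    have "isCont G (H (G y))"
    proof (rule isCont_inverse_function2[where f = H and g = G and a = "G y / 2" and b = "(G y + m) / 2"])
      fix z assume z: "G y / 2 \<le> z" "z \<le> (G y + m) / 2"
      show "G (H z) = z" by (rule G_H) (use Gy z in auto)
      show "isCont H z" by (rule DERIV_isCont[OF der]) (use Gy z \<open>m < b\<close> in auto)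
    qed (use Gy in auto)
    then show "isCont G y" using G[OF that] by simp
    show "(H has_real_derivative H' (G y)) (at (G y))" "H' (G y) \<noteq> 0"
      using Gy \<open>m < b\<close> der[of "G y"] pos[of "G y"] by auto
    show "H (G z) = z" if "y - 1 < z" "z < H m" for z using G[OF that(2)] by simp
  qed (use that in auto)
qed

text \<open>The solution is \<open>r t = H\<^sup>-\<^sup>1 (H r\<^sub>0 - c t)\<close>.\<close>

lemma separable_ode_exists:
  fixes H H' :: "real \<Rightarrow> real"
  assumes der: "\<And>r. 0 < r \<Longrightarrow> r < b \<Longrightarrow> (H has_real_derivative H' r) (at r)"
    and pos: "\<And>r. 0 < r \<Longrightarrow> r < b \<Longrightarrow> H' r > 0"
    and unbounded: "\<And>y. \<exists>r. 0 < r \<and> r < b \<and> H r \<le> y"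
    and "0 < r0" "r0 < b" "c \<ge> 0"
  shows "\<exists>r. r 0 = r0 \<and> (\<forall>t\<ge>0. 0 < r t \<and> r t \<le> r0 \<and> (r has_real_derivative - c / H' (r t)) (at t))"
proof -
  note mono = deriv_pos_imp_strict_mono_below[where b = b, OF der pos]
  define m where "m = (r0 + b) / 2"
  have m: "r0 < m" "m < b" using \<open>r0 < b\<close> by (auto simp: m_def)
  obtain G where G: "\<And>y. y < H m \<Longrightarrow> 0 < G y \<and> G y < m \<and> H (G y) = y"
    and dG: "\<And>y. y < H m \<Longrightarrow> (G has_real_derivative inverse (H' (G y))) (at y)"
    using deriv_pos_inverse_exists[where b = b, OF der pos unbounded _ m(2)] m \<open>0 < r0\<close> by auto
  define r where "r t = G (H r0 - c * t)" for t
  have H_lt: "H r0 - c * t < H m" if "t \<ge> 0" for t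
    using mono[of r0 m] m \<open>0 < r0\<close> mult_nonneg_nonneg[OF \<open>c \<ge> 0\<close> that] by linarith
  have "0 < r t \<and> r t \<le> r0 \<and> (r has_real_derivative - c / H' (r t)) (at t)" if "t \<ge> 0" for t
  proof -
    note Gt = G[OF H_lt[OF that]]
    have "((\<lambda>t. H r0 - c * t) has_real_derivative - c) (at t)" by (auto intro!: derivative_eq_intros)
    from DERIV_chain2[of G _ "\<lambda>t. H r0 - c * t", OF dG[OF H_lt[OF that]] this]
    have "(r has_real_derivative inverse (H' (r t)) * (- c)) (at t)"
      by (simp add: r_def[abs_def])
    moreover have "r t \<le> r0"
    proof (rule ccontr)
      assume "\<not> r t \<le> r0"
      then have "H r0 < H (r t)" using mono[of r0 "r t"] Gt \<open>0 < r0\<close> m by (simp add: r_def)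
      then show False using Gt mult_nonneg_nonneg[OF \<open>c \<ge> 0\<close> that] by (simp add: r_def)
    qed
    ultimately show ?thesis using Gt by (simp add: r_def divide_inverse mult.commute)
  qed
  moreover have "r 0 = r0"
    using G[of "H r0"] mono[of r0 "r 0"] mono[of "r 0" r0] m \<open>0 < r0\<close> H_lt[of 0]
    by (cases "r 0" r0 rule: linorder_cases) (auto simp: r_def)
  ultimately show ?thesis by blast
qed

text \<open>
  A nonzero solution keeps the sign \<open>\<sigma>\<close> of \<open>e\<^sub>0\<close>, and \<open>r = \<sigma> e\<close> solves the separable equation
  \<open>r' = - c / H' r\<close> with \<open>H r = K ln r + \<sigma> r\<close>.
\<close>

lemma saturable_decay_exists:
  fixes K c e0 :: real
  assumes "K > 0" "c \<ge> 0" "\<bar>e0\<bar> < K"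
  shows "\<exists>e. e 0 = e0 \<and> (\<forall>t\<ge>0.
           (e has_real_derivative - c * e t / (K + e t)) (at t within {0..}) \<and> \<bar>e t\<bar> \<le> \<bar>e0\<bar>)"
proof (cases "e0 = 0")
  case True
  then show ?thesis by (intro exI[of _ "\<lambda>t. 0"]) auto
next
  case False
  define \<sigma> where "\<sigma> = sgn e0"
  have \<sigma>: "\<sigma> = 1 \<or> \<sigma> = -1" "e0 = \<sigma> * \<bar>e0\<bar>" using False by (auto simp: \<sigma>_def sgn_if)
  have pos: "K / r + \<sigma> > 0" if "0 < r" "r < K" for r
    using that \<sigma>(1) by (auto simp: field_simps)
  have unbounded: "\<exists>r. 0 < r \<and> r < K \<and> K * ln r + \<sigma> * r \<le> y" for y
  proof -
    define r where "r = min (K / 2) (exp ((y - K) / K))"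
    have r: "0 < r" "r < K" using \<open>K > 0\<close> by (auto simp: r_def)
    have "ln r \<le> ln (exp ((y - K) / K))" using r by (subst ln_le_cancel_iff) (auto simp: r_def)
    then have "K * ln r \<le> y - K" using \<open>K > 0\<close> by (simp add: pos_le_divide_eq mult.commute)
    moreover have "\<sigma> * r \<le> K" using \<sigma>(1) r by auto
    ultimately show ?thesis using r by (intro exI[of _ r]) auto
  qed
  have der: "((\<lambda>r. K * ln r + \<sigma> * r) has_real_derivative K / r + \<sigma>) (at r)" if "0 < r" for r
    using that by (auto intro!: derivative_eq_intros simp: field_simps)
  have "0 < \<bar>e0\<bar>" using False by simp
  from separable_ode_exists[OF der pos unbounded this \<open>\<bar>e0\<bar> < K\<close> \<open>c \<ge> 0\<close>]
  obtain r where r0: "r 0 = \<bar>e0\<bar>" and r: "\<And>t. t \<ge> 0 \<Longrightarrow>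
      0 < r t \<and> r t \<le> \<bar>e0\<bar> \<and> (r has_real_derivative - c / (K / r t + \<sigma>)) (at t)"
    by blast
  show ?thesis
  proof (intro exI[of _ "\<lambda>t. \<sigma> * r t"] conjI allI impI)
    fix t :: real assume "t \<ge> 0"
    note rt = r[OF this]
    have "K + \<sigma> * r t \<noteq> 0" "\<sigma> * \<sigma> = 1"
      using pos[of "r t"] rt assms \<sigma>(1) by (auto simp: field_simps)
    then have "\<sigma> * (- c / (K / r t + \<sigma>)) = - c * (\<sigma> * r t) / (K + \<sigma> * r t)"
      using rt by (simp add: field_simps)
    then show "((\<lambda>t. \<sigma> * r t) has_real_derivative - c * (\<sigma> * r t) / (K + \<sigma> * r t)) (at t within {0..})"
      using DERIV_cmult[OF conjunct2[OF conjunct2[OF rt]], of \<sigma>] by (auto intro: has_field_derivative_at_within)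
    show "\<bar>\<sigma> * r t\<bar> \<le> \<bar>e0\<bar>" using rt \<sigma>(1) by auto
  qed (use r0 \<sigma> in simp)
qed

section \<open>The Perez-Ruixo model\<close>

lemma compartment_dissipation:
  fixes a b :: "real \<Rightarrow> real"
  assumes eq: "s + a w * u0 - b w * y0 = 0"
    and a: "\<bar>a v\<bar> \<le> G" "\<bar>a v - a w\<bar> \<le> \<bar>v - w\<bar>" and b: "d \<le> b v" "\<bar>b v - b w\<bar> \<le> \<bar>v - w\<bar>"
    and E: "\<bar>u0\<bar> \<le> E" "\<bar>y0\<bar> \<le> E"
  shows "(y - y0) * (s + a v * u - b v * y)
    \<le> \<bar>y - y0\<bar> * (G * \<bar>u - u0\<bar> + 2 * E * \<bar>v - w\<bar>) - d * (y - y0)\<^sup>2"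
proof -
  define F where "F = a v * (u - u0) + (a v - a w) * u0 - (b v - b w) * y0"
  have rhs: "s + a v * u - b v * y = F - b v * (y - y0)"
    using eq by (simp add: F_def algebra_simps)
  have "\<bar>a v * (u - u0)\<bar> \<le> G * \<bar>u - u0\<bar>" using a(1) by (simp add: abs_mult mult_right_mono)
  moreover have "\<bar>(a v - a w) * u0\<bar> \<le> \<bar>v - w\<bar> * E" "\<bar>(b v - b w) * y0\<bar> \<le> \<bar>v - w\<bar> * E"
    using a(2) b(2) E by (simp_all add: abs_mult mult_mono')
  moreover have "\<bar>F\<bar> \<le> \<bar>a v * (u - u0)\<bar> + \<bar>(a v - a w) * u0\<bar> + \<bar>(b v - b w) * y0\<bar>"
    unfolding F_def by linarith
  ultimately have "\<bar>F\<bar> \<le> G * \<bar>u - u0\<bar> + \<bar>v - w\<bar> * E + \<bar>v - w\<bar> * E" by linarith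
  then have F: "\<bar>F\<bar> \<le> G * \<bar>u - u0\<bar> + 2 * E * \<bar>v - w\<bar>" by (simp add: algebra_simps)
  have "(y - y0) * F \<le> \<bar>y - y0\<bar> * \<bar>F\<bar>" by (metis abs_ge_self abs_mult)
  also have "\<dots> \<le> \<bar>y - y0\<bar> * (G * \<bar>u - u0\<bar> + 2 * E * \<bar>v - w\<bar>)"
    using F by (rule mult_left_mono) simp
  finally have "(y - y0) * F \<le> \<bar>y - y0\<bar> * (G * \<bar>u - u0\<bar> + 2 * E * \<bar>v - w\<bar>)" .
  moreover have "d * (y - y0)\<^sup>2 \<le> b v * (y - y0)\<^sup>2" using b(1) by (simp add: mult_right_mono)
  moreover have "(y - y0) * (s + a v * u - b v * y) = (y - y0) * F - b v * (y - y0)\<^sup>2"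
    unfolding rhs by (simp add: power2_eq_square algebra_simps)
  ultimately show ?thesis by linarith
qed

lemma saturation_lipschitz:
  fixes S C C' :: real
  assumes "S > 0" "C \<ge> 0" "C' \<ge> 0"
  shows "\<bar>C / (S + C) - C' / (S + C')\<bar> \<le> \<bar>C - C'\<bar> / S"
proof -
  have "C / (S + C) - C' / (S + C') = S * (C - C') / ((S + C) * (S + C'))"
    using assms by (simp add: field_simps)
  also have "\<bar>\<dots>\<bar> = S * \<bar>C - C'\<bar> / ((S + C) * (S + C'))"
    using assms by (simp add: abs_mult)
  also have "\<dots> \<le> S * \<bar>C - C'\<bar> / (S * S)"
    using assms by (intro divide_left_mono mult_mono) auto
  finally show ?thesis using assms by simp
qed

locale epo_model =
  fixes p :: epo_par
  assumes ka_pos: "ka p > 0" and kepo_pos: "kepo p > 0"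
    and KM_pos: "KM p > 0" and V1_pos: "V1 p > 0" and k23_pos: "k23 p > 0" and k32_pos: "k32 p > 0"
    and BSL_pos: "BSL p > 0" and kin_pos: "kin p > 0" and Smax_pos: "Smax p > 0"
    and SC50_pos: "SC50 p > 0" and NP_pos: "NP p > 0" and TP_pos: "TP p > 0"
    and NR_pos: "NR p > 0" and TR_pos: "TR p > 0"
    and kepo_less: "Vmax p > kepo p" and NP_even: "even (NP p)"
begin

definition kp :: real where "kp = real (NP p) / TP p"
definition kr :: real where "kr = real (NR p) / TR p"

lemma kp_pos: "kp > 0" and kr_pos: "kr > 0"
  using NP_pos TP_pos NR_pos TR_pos by (auto simp: kp_def kr_def)

lemma NP_div_2: "NP p = 2 * (NP p div 2)" "1 \<le> NP p div 2"
  using NP_even NP_pos by auto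

definition source :: "nat \<Rightarrow> real" where
  "source j = (if j = 3 then kin p else 0)"

text \<open>For \<open>j = 2\<close>, i.e. \<open>A\<^sub>3\<close>, the predecessor compartment \<open>j - 1\<close> is \<open>A\<^sub>2\<close>.\<close>

definition in_rate :: "nat \<Rightarrow> real \<Rightarrow> real" where
  "in_rate j v =
    (if j = 2 then k23 p else if j = 3 then 0 else if j \<le> 3 + NP p div 2 then v
     else if j \<le> 3 + NP p then kp else kr)"

definition out_rate :: "nat \<Rightarrow> real \<Rightarrow> real" where
  "out_rate j v =
    (if j = 2 then k32 p else if j \<le> 2 + NP p div 2 then v else if j \<le> 2 + NP p then kp else kr)"

definition Ve_of :: "real \<Rightarrow> real" where
  "Ve_of a = Smax p * (BSL p + a / V1 p) / (SC50 p + (BSL p + a / V1 p)) * kp"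

definition Ve_eq :: real where "Ve_eq = Ve_of (A2_eq p)"
definition K_sat :: real where "K_sat = V1 p * KM p + A2_eq p"
definition c_net :: real where "c_net = Vmax p - kepo p"
definition Lip_Ve :: real where "Lip_Ve = Smax p * kp / (SC50 p * V1 p)"

definition rad :: real where
  "rad = min (K_sat / 2) (min (V1 p * C_eq p / 2) (Ve_eq / (2 * Lip_Ve)))"
definition damping :: real where
  "damping = min (ka p) (min (c_net / (2 * K_sat)) (min (k32 p) (min (Ve_eq / 2) (min kp kr))))"
definition eq_bound :: real where
  "eq_bound = A2_eq p + k23 p / k32 p * A2_eq p + P1_eq p + kin p * TP p / real (NP p)
     + kin p * TR p / real (NR p)"
definition in_rate_bound :: real where "in_rate_bound = k23 p + 2 * Ve_eq + kp + kr"
definition coupling_const :: real where "coupling_const = in_rate_bound + 2 * eq_bound * Lip_Ve"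

lemma Ve_Ve_of: "Ve p x = Ve_of (x 1)"
  by (simp add: Ve_def Ve_of_def conc_def kp_def)

lemma C_eq_A2_eq: "C_eq p = BSL p + A2_eq p / V1 p"
  by (simp add: C_eq_def)

lemma A2_eq_pos: "A2_eq p > 0" and C_eq_pos: "C_eq p > 0" and P1_eq_pos: "P1_eq p > 0"
  and K_sat_pos: "K_sat > 0" and c_net_pos: "c_net > 0" and Ve_eq_pos: "Ve_eq > 0"
  and Lip_Ve_pos: "Lip_Ve > 0"
proof -
  show A2: "A2_eq p > 0"
    using kepo_less kepo_pos KM_pos V1_pos by (simp add: A2_eq_def)
  show C: "C_eq p > 0" using A2 BSL_pos V1_pos by (simp add: C_eq_A2_eq add_pos_pos)
  show "P1_eq p > 0" using C kin_pos SC50_pos Smax_pos TP_pos NP_pos by (simp add: P1_eq_def)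
  show "K_sat > 0" using A2 V1_pos KM_pos by (simp add: K_sat_def add_pos_pos)
  show "c_net > 0" using kepo_less by (simp add: c_net_def)
  show "Ve_eq > 0"
    using C Smax_pos SC50_pos kp_pos by (simp add: Ve_eq_def Ve_of_def C_eq_A2_eq[symmetric])
  show "Lip_Ve > 0" using Smax_pos kp_pos SC50_pos V1_pos by (simp add: Lip_Ve_def)
qed

lemma rad_pos: "rad > 0" and damping_pos: "damping > 0" and eq_bound_nonneg: "eq_bound \<ge> 0"
  and in_rate_bound_nonneg: "in_rate_bound \<ge> 0" and coupling_const_nonneg: "coupling_const \<ge> 0"
proof -
  show "rad > 0"
    using K_sat_pos V1_pos C_eq_pos Ve_eq_pos Lip_Ve_pos by (simp add: rad_def)
  show "damping > 0"
    using ka_pos c_net_pos K_sat_pos k32_pos Ve_eq_pos kp_pos kr_pos by (simp add: damping_def)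
  show E: "eq_bound \<ge> 0"
    using A2_eq_pos P1_eq_pos k23_pos k32_pos kin_pos TP_pos TR_pos by (simp add: eq_bound_def)
  show G: "in_rate_bound \<ge> 0"
    using k23_pos Ve_eq_pos kp_pos kr_pos by (simp add: in_rate_bound_def)
  show "coupling_const \<ge> 0" using E G Lip_Ve_pos by (simp add: coupling_const_def)
qed

lemma Ve_of_near_eq:
  assumes "\<bar>a - A2_eq p\<bar> \<le> rad"
  shows "BSL p + a / V1 p > 0" "\<bar>Ve_of a - Ve_eq\<bar> \<le> Lip_Ve * \<bar>a - A2_eq p\<bar>"
    "Ve_eq / 2 \<le> Ve_of a" "Ve_of a \<le> 2 * Ve_eq"
proof -
  have "\<bar>a / V1 p - A2_eq p / V1 p\<bar> = \<bar>a - A2_eq p\<bar> / V1 p"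
    using V1_pos by (simp add: diff_divide_distrib[symmetric] abs_divide)
  also have "\<dots> \<le> C_eq p / 2"
    using assms V1_pos by (simp add: rad_def divide_le_eq mult.commute)
  finally have "\<bar>a / V1 p - A2_eq p / V1 p\<bar> \<le> C_eq p / 2" .
  moreover have "BSL p + a / V1 p = C_eq p + (a / V1 p - A2_eq p / V1 p)" by (simp add: C_eq_A2_eq)
  ultimately show C: "BSL p + a / V1 p > 0"
    using C_eq_pos abs_le_D2[of "a / V1 p - A2_eq p / V1 p"] by linarith
  have "Ve_of a - Ve_eq
      = Smax p * kp * ((BSL p + a / V1 p) / (SC50 p + (BSL p + a / V1 p)) - C_eq p / (SC50 p + C_eq p))"
    by (simp add: Ve_of_def Ve_eq_def C_eq_A2_eq right_diff_distrib mult_ac)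
  then have "\<bar>Ve_of a - Ve_eq\<bar>
      = Smax p * kp * \<bar>(BSL p + a / V1 p) / (SC50 p + (BSL p + a / V1 p)) - C_eq p / (SC50 p + C_eq p)\<bar>"
    using Smax_pos kp_pos by (simp add: abs_mult)
  also have "\<dots> \<le> Smax p * kp * (\<bar>(BSL p + a / V1 p) - C_eq p\<bar> / SC50 p)"
    using C C_eq_pos SC50_pos Smax_pos kp_pos by (intro mult_left_mono saturation_lipschitz) auto
  also have "\<dots> = Lip_Ve * \<bar>a - A2_eq p\<bar>"
    using V1_pos SC50_pos
    by (simp add: Lip_Ve_def C_eq_A2_eq diff_divide_distrib[symmetric] abs_divide)
  finally show L: "\<bar>Ve_of a - Ve_eq\<bar> \<le> Lip_Ve * \<bar>a - A2_eq p\<bar>" .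
  have "Lip_Ve * \<bar>a - A2_eq p\<bar> \<le> Lip_Ve * (Ve_eq / (2 * Lip_Ve))"
    using assms Lip_Ve_pos by (intro mult_left_mono) (auto simp: rad_def)
  with L Lip_Ve_pos have near: "\<bar>Ve_of a - Ve_eq\<bar> \<le> Ve_eq / 2" by simp
  from abs_le_D1[OF near] abs_le_D2[OF near]
  show "Ve_eq / 2 \<le> Ve_of a" "Ve_of a \<le> 2 * Ve_eq" by linarith+
qed

lemma epo_eq_balance:
  "Ve p (epo_eq p) = Ve_eq" "Ve_eq * P1_eq p = kin p"
  "kp * (kin p * TP p / real (NP p)) = kin p" "kr * (kin p * TR p / real (NR p)) = kin p"
proof -
  show "Ve p (epo_eq p) = Ve_eq" by (simp add: Ve_Ve_of Ve_eq_def epo_eq_def)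
  have "Ve_eq * P1_eq p = kin p * ((Smax p * C_eq p) / (Smax p * C_eq p))
      * ((SC50 p + C_eq p) / (SC50 p + C_eq p)) * (real (NP p) / real (NP p)) * (TP p / TP p)"
    by (simp add: Ve_eq_def Ve_of_def C_eq_A2_eq[symmetric] P1_eq_def kp_def)
  then show "Ve_eq * P1_eq p = kin p"
    using C_eq_pos SC50_pos Smax_pos NP_pos TP_pos by simp
  show "kp * (kin p * TP p / real (NP p)) = kin p" "kr * (kin p * TR p / real (NR p)) = kin p"
    using NP_pos TP_pos NR_pos TR_pos by (simp_all add: kp_def kr_def)
qed

lemma epo_field_cascade_form:
  assumes "2 \<le> j" "j < state_dim p"
  shows "epo_field p x j = source j + in_rate j (Ve p x) * x (j - 1) - out_rate j (Ve p x) * x j"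
proof -
  have idx: "2 + (j - 2) = j" "3 \<le> j \<Longrightarrow> 2 + (j - 2 - 1) = j - 1"
    "2 + NP p \<le> j \<Longrightarrow> 2 + NP p + (j - (2 + NP p)) = j"
    "3 + NP p \<le> j \<Longrightarrow> 2 + NP p + (j - (2 + NP p) - 1) = j - 1"
    using assms by auto
  note defs = epo_field_def Let_def source_def in_rate_def out_rate_def state_dim_def kp_def kr_def
  consider "j = 3 + NP p div 2" | "j = 3 + NP p" | "j \<noteq> 3 + NP p div 2" "j \<noteq> 3 + NP p" by blast
  then show ?thesis
  proof cases
    case 1
    then show ?thesis using NP_div_2 by (simp add: defs numeral_3_eq_3 algebra_simps)
  next
    case 2
    then show ?thesis using NP_div_2 NR_pos by (simp add: defs numeral_3_eq_3 algebra_simps)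
  next
    case 3
    then show ?thesis using assms NP_div_2 idx NR_pos
      by (auto simp: defs numeral_3_eq_3 algebra_simps)
  qed
qed

lemma epo_field_A2:
  assumes "K_sat + (x 1 - A2_eq p) \<noteq> 0"
  shows "epo_field p x 1 = - c_net * (x 1 - A2_eq p) / (K_sat + (x 1 - A2_eq p))"
proof -
  have "KM p + x 1 / V1 p = (K_sat + (x 1 - A2_eq p)) / V1 p"
    using V1_pos by (simp add: K_sat_def field_simps)
  moreover have "c_net * A2_eq p = kepo p * V1 p * KM p"
    using kepo_less by (simp add: c_net_def A2_eq_def)
  ultimately show ?thesis
    using assms V1_pos by (simp add: epo_field_def c_net_def K_sat_def field_simps)
qed

lemma epo_field_epo_eq:
  assumes "j < state_dim p"
  shows "epo_field p (epo_eq p) j = 0"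
proof -
  consider "j = 0" | "j = 1" | "2 \<le> j" by linarith
  then show ?thesis
  proof cases
    case 2
    then show ?thesis
      using kepo_less kepo_pos KM_pos V1_pos by (simp add: epo_field_def epo_eq_def A2_eq_def field_simps)
  next
    case 3
    have "source j + in_rate j Ve_eq * epo_eq p (j - 1) - out_rate j Ve_eq * epo_eq p j = 0"
      using assms 3 NP_div_2 epo_eq_balance(2-4) k32_pos
      by (auto simp: source_def in_rate_def out_rate_def epo_eq_def state_dim_def)
    then show ?thesis
      using epo_field_cascade_form[OF 3 assms] epo_eq_balance(1) by simp
  qed (simp add: epo_field_def epo_eq_def)
qed

lemma abs_epo_eq_le: "\<bar>epo_eq p j\<bar> \<le> eq_bound"
  using A2_eq_pos P1_eq_pos k23_pos k32_pos kin_pos TP_pos TR_pos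
  by (auto simp: epo_eq_def eq_bound_def)

lemma rate_bounds_near_eq:
  assumes "2 \<le> j" "Ve_eq / 2 \<le> v" "v \<le> 2 * Ve_eq"
  shows "\<bar>in_rate j v\<bar> \<le> in_rate_bound" "\<bar>in_rate j v - in_rate j w\<bar> \<le> \<bar>v - w\<bar>"
    "damping \<le> out_rate j v" "\<bar>out_rate j v - out_rate j w\<bar> \<le> \<bar>v - w\<bar>"
proof -
  have "0 \<le> v" using assms Ve_eq_pos by linarith
  then show "\<bar>in_rate j v\<bar> \<le> in_rate_bound"
    using assms k23_pos Ve_eq_pos kp_pos kr_pos by (auto simp: in_rate_def in_rate_bound_def)
  show "\<bar>in_rate j v - in_rate j w\<bar> \<le> \<bar>v - w\<bar>" "\<bar>out_rate j v - out_rate j w\<bar> \<le> \<bar>v - w\<bar>"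
    by (auto simp: in_rate_def out_rate_def)
  have "damping \<le> k32 p" "damping \<le> Ve_eq / 2" "damping \<le> kp" "damping \<le> kr"
    by (auto simp: damping_def)
  then show "damping \<le> out_rate j v" using assms by (auto simp: out_rate_def)
qed

lemma epo_transit_dissipation:
  assumes near: "\<bar>x 1 - A2_eq p\<bar> \<le> rad" and j: "2 \<le> j" "j < state_dim p"
  defines "y \<equiv> \<lambda>i. x i - epo_eq p i"
  shows "y j * epo_field p x j \<le> \<bar>y j\<bar> * (coupling_const * (\<bar>y 1\<bar> + \<bar>y (j - 1)\<bar>)) - damping * (y j)\<^sup>2"
proof -
  let ?v = "Ve p x"
  have v: "\<bar>?v - Ve_eq\<bar> \<le> Lip_Ve * \<bar>y 1\<bar>" "Ve_eq / 2 \<le> ?v" "?v \<le> 2 * Ve_eq"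
    using Ve_of_near_eq[OF near] by (simp_all add: Ve_Ve_of y_def epo_eq_def)
  have eq: "source j + in_rate j Ve_eq * epo_eq p (j - 1) - out_rate j Ve_eq * epo_eq p j = 0"
    using epo_field_epo_eq[OF j(2)] epo_field_cascade_form[OF j] epo_eq_balance(1) by simp
  note R = rate_bounds_near_eq[OF j(1) v(2,3)]
  have "y j * epo_field p x j
      \<le> \<bar>y j\<bar> * (in_rate_bound * \<bar>y (j - 1)\<bar> + 2 * eq_bound * \<bar>?v - Ve_eq\<bar>) - damping * (y j)\<^sup>2"
    unfolding epo_field_cascade_form[OF j] y_def
    by (rule compartment_dissipation[OF eq R(1,2,3,4) abs_epo_eq_le abs_epo_eq_le])
  also have "\<dots> \<le> \<bar>y j\<bar> * (coupling_const * (\<bar>y 1\<bar> + \<bar>y (j - 1)\<bar>)) - damping * (y j)\<^sup>2"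
  proof -
    have "2 * eq_bound * \<bar>?v - Ve_eq\<bar> \<le> 2 * eq_bound * Lip_Ve * \<bar>y 1\<bar>"
      using v(1) eq_bound_nonneg by (simp add: mult_left_mono)
    moreover have "in_rate_bound * \<bar>y (j - 1)\<bar> \<le> coupling_const * \<bar>y (j - 1)\<bar>"
      "2 * eq_bound * Lip_Ve * \<bar>y 1\<bar> \<le> coupling_const * \<bar>y 1\<bar>"
      using eq_bound_nonneg in_rate_bound_nonneg Lip_Ve_pos
      by (auto simp: coupling_const_def intro!: mult_right_mono)
    ultimately show ?thesis by (intro diff_right_mono mult_left_mono) (auto simp: distrib_left)
  qed
  finally show ?thesis .
qed

lemma epo_cascade_dissipative:
  "cascade_dissipative (state_dim p) (epo_field p) (epo_eq p) rad damping coupling_const"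
  unfolding cascade_dissipative_def
proof (intro allI impI)
  fix x :: "nat \<Rightarrow> real" and i :: nat
  assume near: "\<bar>x 1 - epo_eq p 1\<bar> \<le> rad" and i: "i < state_dim p"
  have A2: "epo_eq p 1 = A2_eq p" by (simp add: epo_eq_def)
  consider "i = 0" | "i = 1" | "2 \<le> i" by linarith
  then show "(x i - epo_eq p i) * epo_field p x i \<le> \<bar>x i - epo_eq p i\<bar>
      * cascade_coupling coupling_const (\<lambda>j. x j - epo_eq p j) i - damping * (x i - epo_eq p i)\<^sup>2"
  proof cases
    case 1
    have "damping * (x 0)\<^sup>2 \<le> ka p * (x 0)\<^sup>2" by (intro mult_right_mono) (auto simp: damping_def)
    then show ?thesis
      using 1 by (simp add: epo_field_def epo_eq_def cascade_coupling_def power2_eq_square mult_ac)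
  next
    case 2
    define e where "e = x 1 - A2_eq p"
    have e: "\<bar>e\<bar> \<le> K_sat / 2" using near A2 by (simp add: e_def rad_def)
    then have K: "0 < K_sat + e" "K_sat + e \<le> 2 * K_sat" using K_sat_pos by (auto simp: abs_le_iff)
    have "damping \<le> c_net / (2 * K_sat)" by (simp add: damping_def)
    also have "\<dots> \<le> c_net / (K_sat + e)" using K c_net_pos by (intro divide_left_mono) auto
    finally have "damping * e\<^sup>2 \<le> c_net / (K_sat + e) * e\<^sup>2" by (rule mult_right_mono) simp
    moreover have "e * epo_field p x 1 = - (c_net / (K_sat + e) * e\<^sup>2)"
      using epo_field_A2[of x] K by (simp add: e_def power2_eq_square)
    ultimately show ?thesis using 2 A2 by (simp add: e_def cascade_coupling_def)
  next
    case 3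
    then show ?thesis
      using epo_transit_dissipation[of x, OF near[unfolded A2] 3 i] by (simp add: cascade_coupling_def)
  qed
qed

lemma continuous_on_rates:
  assumes "continuous_on S g"
  shows "continuous_on S (\<lambda>t. in_rate j (g t))" "continuous_on S (\<lambda>t. out_rate j (g t))"
proof -
  have If: "continuous_on S (\<lambda>t. if P then f t else h t)"
    if "continuous_on S f" "continuous_on S h" for P and f h :: "_ \<Rightarrow> real"
    using that by (cases P) auto
  show "continuous_on S (\<lambda>t. in_rate j (g t))" "continuous_on S (\<lambda>t. out_rate j (g t))"
    unfolding in_rate_def out_rate_def by (intro If continuous_on_const assms)+
qed

lemma epo_A2_solution_exists:
  assumes "\<bar>a0 - A2_eq p\<bar> < rad"
  shows "\<exists>u. u 0 = a0 \<and> (\<forall>t\<ge>0. \<bar>u t - A2_eq p\<bar> < rad \<and>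
    (u has_real_derivative - c_net * (u t - A2_eq p) / (K_sat + (u t - A2_eq p))) (at t within {0..}))"
proof -
  have "\<bar>a0 - A2_eq p\<bar> < K_sat" using assms K_sat_pos by (simp add: rad_def)
  then obtain e where "e 0 = a0 - A2_eq p" and e: "\<And>t. t \<ge> 0 \<Longrightarrow>
      (e has_real_derivative - c_net * e t / (K_sat + e t)) (at t within {0..}) \<and> \<bar>e t\<bar> < rad"
    using saturable_decay_exists[of K_sat c_net "a0 - A2_eq p"] K_sat_pos c_net_pos assms
    by (fastforce intro: le_less_trans)
  then show ?thesis
    by (intro exI[of _ "\<lambda>t. A2_eq p + e t"]) (auto intro!: derivative_eq_intros)
qed

lemma epo_transit_solution_exists:
  assumes cont_u: "continuous_on {0..} u" and near: "\<And>t. t \<ge> 0 \<Longrightarrow> \<bar>u t - A2_eq p\<bar> \<le> rad"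
  shows "\<exists>w. w 0 = u \<and> (\<forall>k. w (Suc k) 0 = y0 k \<and> (\<forall>t\<ge>0.
      (w (Suc k) has_real_derivative source (k + 2) + in_rate (k + 2) (Ve_of (u t)) * w k t
        - out_rate (k + 2) (Ve_of (u t)) * w (Suc k) t) (at t within {0..})))"
proof (rule linear_cascade_exists)
  have "continuous_on {0..} (\<lambda>t. Ve_of (u t))"
    unfolding Ve_of_def using Ve_of_near_eq(1)[OF near] SC50_pos V1_pos
    by (intro continuous_intros cont_u) (auto simp: add_pos_pos[THEN less_imp_neq, symmetric])
  then show "continuous_on {0..} (\<lambda>t. in_rate (k + 2) (Ve_of (u t)))"
    "continuous_on {0..} (\<lambda>t. out_rate (k + 2) (Ve_of (u t)))" for k
    by (rule continuous_on_rates)+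
qed (use cont_u in auto)

lemma epo_solution_exists:
  assumes "\<bar>x0 1 - A2_eq p\<bar> < rad"
  shows "\<exists>x. is_solution (state_dim p) (epo_field p) {0..} x \<and> (\<forall>i<state_dim p. x 0 i = x0 i)"
proof -
  obtain u where u0: "u 0 = x0 1" and u: "\<And>t. t \<ge> 0 \<Longrightarrow> \<bar>u t - A2_eq p\<bar> < rad \<and>
      (u has_real_derivative - c_net * (u t - A2_eq p) / (K_sat + (u t - A2_eq p))) (at t within {0..})"
    using epo_A2_solution_exists[OF assms] by blast
  have "continuous_on {0..} u" by (rule DERIV_continuous_on) (use u in auto)
  then obtain w where w0: "w 0 = u" and w: "\<And>k. w (Suc k) 0 = x0 (k + 2) \<and> (\<forall>t\<ge>0.
      (w (Suc k) has_real_derivative source (k + 2) + in_rate (k + 2) (Ve_of (u t)) * w k t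
        - out_rate (k + 2) (Ve_of (u t)) * w (Suc k) t) (at t within {0..}))"
    using epo_transit_solution_exists[of u "\<lambda>k. x0 (k + 2)"] u by fastforce
  define x where "x t i = (if i = 0 then x0 0 * exp (- ka p * t) else w (i - 1) t)" for t i
  have x1: "(\<lambda>t. x t 1) = u" by (simp add: x_def w0)
  have index_cases: "i = 0 \<or> i = 1 \<or> (\<exists>k. i = k + 2)" for i :: nat by presburger
  have "((\<lambda>s. x s i) has_real_derivative epo_field p (x t) i) (at t within {0..})"
    if i: "i < state_dim p" and t: "t \<ge> 0" for i t
  proof -
    have "K_sat + (u t - A2_eq p) \<noteq> 0" using u[OF t] K_sat_pos by (auto simp: rad_def)
    then have "epo_field p (x t) 1 = - c_net * (u t - A2_eq p) / (K_sat + (u t - A2_eq p))"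
      using epo_field_A2[of "x t"] x1 by (simp add: fun_eq_iff)
    moreover have "Ve p (x t) = Ve_of (u t)" by (simp add: Ve_Ve_of x1[symmetric])
    ultimately show ?thesis
      using index_cases[of i] u[OF t] x1 w t epo_field_cascade_form[of i "x t"] i
      by (auto simp: x_def epo_field_def numeral_2_eq_2 intro!: derivative_eq_intros)
  qed
  moreover have "x 0 i = x0 i" for i
    using index_cases[of i] w u0 by (auto simp: x_def w0 numeral_2_eq_2)
  ultimately show ?thesis unfolding is_solution_def by blast
qed

end

theorem (in epo_model) epo_loc_asym_stable: "loc_asym_stable (state_dim p) (epo_field p) (epo_eq p)"
proof (rule loc_asym_stable_if_cascade_dissipative[OF epo_field_epo_eq epo_cascade_dissipative])
  show "\<exists>x. is_solution (state_dim p) (epo_field p) {0..} x \<and> (\<forall>i<state_dim p. x 0 i = x0 i)"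
    if "\<bar>x0 1 - epo_eq p 1\<bar> < rad" for x0
    using that epo_solution_exists by (simp add: epo_eq_def)
qed (use rad_pos damping_pos coupling_const_nonneg in \<open>auto simp: state_dim_def\<close>)

theorem proposition5p1:
  fixes p :: epo_par
  assumes "ka p > 0" "kepo p > 0" "Vmax p > 0" "KM p > 0" "V1 p > 0"
    "k23 p > 0" "k32 p > 0" "BSL p > 0" "kin p > 0" "Smax p > 0"
    "SC50 p > 0" "NP p > 0" "TP p > 0" "NR p > 0" "TR p > 0"
    "Vmax p > kepo p" "even (NP p)"
  shows "loc_asym_stable (state_dim p) (epo_field p) (epo_eq p)"
proof -
  interpret epo_model p using assms by unfold_locales \<comment> \<open>\<open>Vmax p > 0\<close> is implied by \<open>Vmax p > kepo p > 0\<close>\<close>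
  show ?thesis by (rule epo_loc_asym_stable)
qed

end
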